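(* Let $m,n,T$ be positive integers with $T\ge 2$, let $\mathbf{G}\in\mathbb{F}_2^{n\times m}$ have $n$ distinct nonzero rows $\mathbf{g}_1,\dots,\mathbf{g}_n$ spanning a subspace of dimension $T$, and let $\mathbf{A}\in\mathbb{F}_2^{T\times m}$ be a matrix whose rows form a basis of the row space of $\mathbf{G}$. If $\lceil T/2\rceil\le k<T$, then there exists a matrix $\mathbf{P}\in\mathbb{F}_2^{T_k\times T}$ with $T_k\le\min\{n,\,T+1\}$ such that every $\mathbf{g}_i$ is the sum over $\mathbb{F}_2$ of at most $k$ rows of $\mathbf{P}\mathbf{A}$.
   Context: Such a $\mathbf{P}$ is called a $k$-limited-access scheme with $T_k$ transmissions for the coding matrix $\mathbf{A}$. *)

theory Defs
  imports "Jordan_Normal_Form.DL_Rank" "HOL-Library.Z2"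
begin

definition row_space_dim :: "nat \<Rightarrow> bit mat \<Rightarrow> nat" where
  "row_space_dim m G = vec_space.rank m (transpose_mat G)"

end

theory Submission
  imports Defs
begin

text \<open>Write \<open>g\<^sub>i = c\<^sub>i A\<close> with \<open>c\<^sub>i \<in> \<bbbF>\<^sub>2\<^sup>T\<close>. Since a sum of rows of \<open>P A\<close> is
  (the corresponding sum of rows of \<open>P\<close>) times \<open>A\<close>, it suffices that every \<open>c\<^sub>i\<close> be a sum of at
  most \<open>k\<close> rows of \<open>P\<close>. If \<open>n \<le> T + 1\<close>, let \<open>P\<close> have the rows \<open>c\<^sub>i\<close>. Otherwise let \<open>P\<close> be the
  identity stacked on the all-ones row: a vector of weight \<open>w \<le> k\<close> is the sum of \<open>w\<close> unit rows,
  and one of weight \<open>w > k\<close> is the all-ones row plus the \<open>T - w\<close> unit rows off its support,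
  i.e. \<open>T - w + 1 \<le> T - k \<le> k\<close> rows.\<close>

lemmas finsum_vec_cong =
  comm_monoid.finprod_cong'[OF comm_monoid_vec, folded finsum_vec_def, unfolded monoid_vec_simps]

lemma finsum_vec_singleton:
  "v i \<in> carrier_vec n \<Longrightarrow> finsum_vec TYPE('a::comm_monoid_add) n v {i} = v i"
  using finsum_vec_insert[of "{}" i v n] by (simp add: finsum_vec_empty)

lemma index_finsum_rows:
  assumes P: "P \<in> carrier_mat nr nc" and S: "S \<subseteq> {..<nr}" and l: "l < nc"
  shows "finsum_vec TYPE('a::comm_monoid_add) nc (row P) S $ l = (\<Sum>r\<in>S. P $$ (r, l))"
proof -
  have "finite S" using S finite_subset by blast
  then show ?thesis
    using P S l by (subst index_finsum_vec) (auto intro!: sum.cong)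
qed

lemma finsum_vec_mult_mat_vec:
  fixes B :: "'a::semiring_0 mat"
  assumes B: "B \<in> carrier_mat nr nc" and "finite S" and v: "v \<in> S \<rightarrow> carrier_vec nc"
  shows "finsum_vec TYPE('a) nr (\<lambda>s. B *\<^sub>v v s) S = B *\<^sub>v finsum_vec TYPE('a) nc v S"
  using \<open>finite S\<close> v
proof (induction S)
  case empty
  show ?case using B by (auto simp: finsum_vec_empty intro!: eq_vecI)
next
  case (insert s S)
  have v: "v \<in> S \<rightarrow> carrier_vec nc" "v s \<in> carrier_vec nc" using insert.prems by auto
  have Bv: "(\<lambda>s. B *\<^sub>v v s) \<in> S \<rightarrow> carrier_vec nr" "B *\<^sub>v v s \<in> carrier_vec nr"
    using v B by (auto intro!: mult_mat_vec_carrier)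
  show ?case
    using finsum_vec_insert[OF insert.hyps Bv] finsum_vec_insert[OF insert.hyps v]
      insert.IH[OF v(1)] mult_add_distrib_mat_vec[OF B v(2) finsum_vec_closed[OF v(1)]]
    by simp
qed

lemma row_mult_mat_eq_transpose_mult:
  fixes P A :: "'a::comm_semiring_0 mat"
  assumes "P \<in> carrier_mat nr n" and "A \<in> carrier_mat n nc" and "i < nr"
  shows "row (P * A) i = A\<^sup>T *\<^sub>v row P i"
proof (rule eq_vecI)
  fix j assume "j < dim_vec (A\<^sup>T *\<^sub>v row P i)"
  then have "j < nc" using assms by simp
  then show "row (P * A) i $ j = (A\<^sup>T *\<^sub>v row P i) $ j"
    using assms comm_scalar_prod[of "row P i" n "col A j"] by auto
qed (use assms in simp)

lemma finsum_rows_mult_mat: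
  fixes P A :: "'a::comm_semiring_0 mat"
  assumes P: "P \<in> carrier_mat nr n" and A: "A \<in> carrier_mat n nc" and S: "S \<subseteq> {..<nr}"
  shows "finsum_vec TYPE('a) nc (row (P * A)) S = A\<^sup>T *\<^sub>v finsum_vec TYPE('a) n (row P) S"
proof -
  have "finite S" using S finite_subset by blast
  have "finsum_vec TYPE('a) nc (row (P * A)) S = finsum_vec TYPE('a) nc (\<lambda>i. A\<^sup>T *\<^sub>v row P i) S"
    using S row_mult_mat_eq_transpose_mult[OF P A] A P by (intro finsum_vec_cong) (auto intro!: mult_mat_vec_carrier)
  also have "\<dots> = A\<^sup>T *\<^sub>v finsum_vec TYPE('a) n (row P) S"
    using A P by (intro finsum_vec_mult_mat_vec[OF _ \<open>finite S\<close>]) auto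
  finally show ?thesis .
qed

lemma row_space_coefficients:
  fixes G A :: "'a::field mat"
  assumes G: "G \<in> carrier_mat n m" and A: "A \<in> carrier_mat T m"
    and "vec_space.row_space m A = vec_space.row_space m G" and "i < n"
  shows "\<exists>y\<in>carrier_vec T. row G i = A\<^sup>T *\<^sub>v y"
proof -
  have "row G i \<in> vec_space.row_space m G"
    unfolding vec_space.row_space_def
    by (rule vectorspace.span_mem[OF vec_vs]) (use G \<open>i < n\<close> in \<open>auto simp: rows_def module_vec_simps\<close>)
  then have "row G i \<in> vec_space.row_space m A" using assms(3) by simp
  then show ?thesis unfolding vec_space.row_space_eq[OF A] using A by (auto intro: sym)
qed

definition identity_ones_mat :: "nat \<Rightarrow> 'a::zero_neq_one mat" where
  "identity_ones_mat T = mat (T + 1) T (\<lambda>(r, l). if r < T then of_bool (r = l) else 1)"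

lemma identity_ones_mat_carrier: "identity_ones_mat T \<in> carrier_mat (T + 1) T"
  unfolding identity_ones_mat_def by simp

lemma index_finsum_rows_identity_ones_mat:
  assumes S: "S \<subseteq> {..<T + 1}" and l: "l < T"
  shows "finsum_vec TYPE('a::comm_semiring_1) T (row (identity_ones_mat T)) S $ l
    = of_bool (l \<in> S) + of_bool (T \<in> S)"
proof -
  have "finite S" using S finite_subset by blast
  have "finsum_vec TYPE('a) T (row (identity_ones_mat T)) S $ l
      = (\<Sum>r\<in>S. identity_ones_mat T $$ (r, l))"
    by (rule index_finsum_rows[OF identity_ones_mat_carrier S l])
  also have "\<dots> = (\<Sum>r\<in>S. of_bool (r = l) + of_bool (r = T))"
    using S l by (intro sum.cong) (auto simp: identity_ones_mat_def)
  also have "\<dots> = of_bool (l \<in> S) + of_bool (T \<in> S)"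
    using \<open>finite S\<close> by (simp add: sum.distrib of_bool_def)
  finally show ?thesis .
qed

lemma bit_vec_sum_of_k_rows_identity_ones_mat:
  fixes y :: "bit vec"
  assumes y: "y \<in> carrier_vec T" and k: "T \<le> 2 * k"
  shows "\<exists>S \<subseteq> {..<T + 1}. card S \<le> k
    \<and> finsum_vec TYPE(bit) T (row (identity_ones_mat T)) S = y"
proof -
  define supp where "supp = {l. l < T \<and> y $ l = 1}"
  have supp: "supp \<subseteq> {..<T}"
    unfolding supp_def by auto
  have y_supp: "y $ l = of_bool (l \<in> supp)" if "l < T" for l
    unfolding supp_def using that by auto
  have sum_eq: "finsum_vec TYPE(bit) T (row (identity_ones_mat T)) S = y"
    if "S \<subseteq> {..<T + 1}" and "\<And>l. l < T \<Longrightarrow> of_bool (l \<in> S) + of_bool (T \<in> S) = y $ l" for S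
  proof (rule eq_vecI)
    have "finsum_vec TYPE(bit) T (row (identity_ones_mat T)) S \<in> carrier_vec T"
      by (rule finsum_vec_closed) (simp add: identity_ones_mat_def row_def)
    then show "dim_vec (finsum_vec TYPE(bit) T (row (identity_ones_mat T)) S) = dim_vec y"
      using y by simp
  qed (use that y in \<open>simp add: index_finsum_rows_identity_ones_mat\<close>)
  show ?thesis
  proof (cases "card supp \<le> k")
    case True
    have "finsum_vec TYPE(bit) T (row (identity_ones_mat T)) supp = y"
      using supp y_supp by (intro sum_eq) auto
    with True supp show ?thesis by (intro exI[of _ supp]) auto
  next
    case False
    define S where "S = insert T ({..<T} - supp)"
    have "card S = T - card supp + 1"
      unfolding S_def using supp by (simp add: card_Diff_subset finite_subset)
    moreover have "card supp \<le> T"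
      using card_mono[OF finite_lessThan supp] by simp
    ultimately have "card S \<le> k" using False k by linarith
    moreover have "finsum_vec TYPE(bit) T (row (identity_ones_mat T)) S = y"
      using y_supp unfolding S_def by (intro sum_eq) auto
    moreover have "S \<subseteq> {..<T + 1}"
      unfolding S_def by auto
    ultimately show ?thesis by blast
  qed
qed

theorem theorem1:
  fixes m n T k :: nat and G A :: "bit mat"
  assumes "0 < m" and "0 < n" and "2 \<le> T"
    and G: "G \<in> carrier_mat n m"
    and "distinct (rows G)"
    and "\<forall>i<n. row G i \<noteq> 0\<^sub>v m"
    and "row_space_dim m G = T"
    and A: "A \<in> carrier_mat T m"
    and "distinct (rows A)"
    and "\<not> module.lin_dep class_ring (module_vec TYPE(bit) m) (set (rows A))"
    and "vec_space.row_space m A = vec_space.row_space m G"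
    and "(T + 1) div 2 \<le> k" and "k < T"
  shows "\<exists>Tk P. P \<in> carrier_mat Tk T \<and> Tk \<le> min n (T + 1) \<and>
           (\<forall>i<n. \<exists>S. S \<subseteq> {..<Tk} \<and> card S \<le> k \<and>
              row G i = finsum_vec TYPE(bit) m (\<lambda>j. row (P * A) j) S)"
proof -
  have k: "1 \<le> k" "T \<le> 2 * k" using assms(3,12) by auto
  obtain c where c: "\<And>i. i < n \<Longrightarrow> c i \<in> carrier_vec T \<and> row G i = A\<^sup>T *\<^sub>v c i"
    using row_space_coefficients[OF G A assms(11)] by metis
  have "\<exists>Tk P. P \<in> carrier_mat Tk T \<and> Tk \<le> min n (T + 1) \<and>
      (\<forall>i<n. \<exists>S \<subseteq> {..<Tk}. card S \<le> k \<and> finsum_vec TYPE(bit) T (row P) S = c i)"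
  proof (cases "n \<le> T + 1")
    case True
    define P where "P = mat n T (\<lambda>(i, l). c i $ l)"
    have "\<exists>S \<subseteq> {..<n}. card S \<le> k \<and> finsum_vec TYPE(bit) T (row P) S = c i" if "i < n" for i
      using that k(1) c[OF that] by (intro exI[of _ "{i}"]) (auto simp: finsum_vec_singleton P_def)
    with True show ?thesis
      by (intro exI[of _ n] exI[of _ P]) (auto simp: P_def)
  next
    case False
    then show ?thesis
      using bit_vec_sum_of_k_rows_identity_ones_mat[OF _ k(2)] c identity_ones_mat_carrier
      by (intro exI[of _ "T + 1"] exI[of _ "identity_ones_mat T"]) auto
  qed
  then obtain Tk P where P: "P \<in> carrier_mat Tk T" "Tk \<le> min n (T + 1)"
    and sums: "\<forall>i<n. \<exists>S \<subseteq> {..<Tk}. card S \<le> k \<and> finsum_vec TYPE(bit) T (row P) S = c i"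
    by blast
  show ?thesis
    using P c sums finsum_rows_mult_mat[OF P(1) A] by metis
qed

end
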